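(* In the errorless symmetric relay network described in the context, the greedy policy $G$ is optimal for minimizing the average sum AoI at the destination nodes: for every horizon $T\ge1$, $G$ minimizes $\frac{1}{TK}\sum_{t=1}^T\sum_{k=1}^K h_k^{\pi}(t)$ over all policies $\pi$. Furthermore, for every time slot $t$, $G$ minimizes the instantaneous sums $\frac1K\sum_{k=1}^K h_k^{\pi}(t)$ and $\frac1K\sum_{k=1}^K g_k^{\pi}(t)$ over all policies $\pi$.
   Context: Fix integers $K\ge 2$ and $S,U$ with $1\le S<K$, $1\le U<K$, and $S=U$. There are $K$ processes indexed by $k\in\{1,\dots,K\}$ and time slots $t=1,2,\dots$. The state at time $t$ consists of relay AoI values $g_k(t)$ and destination AoI values $h_k(t)$, with $g_k(1)=h_k(1)=1$ for all $k$. A policy $\pi$ is a map assigning to the current state a pair $(\mathcal{S}^{\pi}(t),\mathcal{U}^{\pi}(t))$ of subsets of $\{1,\dots,K\}$ with $|\mathcal{S}^{\pi}(t)|=S$ and $|\mathcal{U}^{\pi}(t)|=U$. Errorless dynamics: $g_k(t+1)=1$ if $k\in\mathcal{S}(t)$, else $g_k(t+1)=g_k(t)+1$; $h_k(t+1)=g_k(t)+1$ if $k\in\mathcal{U}(t)$, else $h_k(t+1)=h_k(t)+1$. Write $g_k^\pi(t),h_k^\pi(t)$ for the sequences under $\pi$. The greedy policy $G$ chooses at each time $t$ a set $\mathcal{S}^G(t)$ of $S$ indices with the largest values $g_k(t)$ (i.e. maximizing $\sum_{k\in\mathcal{S}}g_k(t)$ over $|\mathcal{S}|=S$) and a set $\mathcal{U}^G(t)$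 of $U$ indices with the largest gaps $h_k(t)-g_k(t)$ (i.e. maximizing $\sum_{k\in\mathcal{U}}(h_k(t)-g_k(t))$ over $|\mathcal{U}|=U$). *)

theory Defs
  imports "HOL-Analysis.Analysis"
begin

text \<open>State of the network: relay AoI g and destination AoI h, as functions of the
process index k (only indices 1..K are meaningful).\<close>
type_synonym state = "(nat \<Rightarrow> nat) \<times> (nat \<Rightarrow> nat)"

text \<open>A policy maps the current state to the pair (scheduled sampling set, scheduled update set).\<close>
type_synonym policy = "state \<Rightarrow> nat set \<times> nat set"

definition valid_policy :: "nat \<Rightarrow> nat \<Rightarrow> nat \<Rightarrow> policy \<Rightarrow> bool" where
  "valid_policy K S U \<pi> \<longleftrightarrow>
     (\<forall>st. fst (\<pi> st) \<subseteq> {1..K} \<and> card (fst (\<pi> st)) = S \<and>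
           snd (\<pi> st) \<subseteq> {1..K} \<and> card (snd (\<pi> st)) = U)"

definition step :: "nat set \<Rightarrow> nat set \<Rightarrow> state \<Rightarrow> state" where
  "step Ss Us st =
     ((\<lambda>k. if k \<in> Ss then 1 else fst st k + 1),
      (\<lambda>k. if k \<in> Us then fst st k + 1 else snd st k + 1))"

text \<open>traj \<pi> n is the state at time slot t = n + 1 (so traj \<pi> 0 is the state at t = 1).\<close>
fun traj :: "policy \<Rightarrow> nat \<Rightarrow> state" where
  "traj \<pi> 0 = ((\<lambda>k. 1), (\<lambda>k. 1))"
| "traj \<pi> (Suc n) = step (fst (\<pi> (traj \<pi> n))) (snd (\<pi> (traj \<pi> n))) (traj \<pi> n)"

definition gAoI :: "policy \<Rightarrow> nat \<Rightarrow> nat \<Rightarrow> nat" where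
  "gAoI \<pi> k t = fst (traj \<pi> (t - 1)) k"

definition hAoI :: "policy \<Rightarrow> nat \<Rightarrow> nat \<Rightarrow> nat" where
  "hAoI \<pi> k t = snd (traj \<pi> (t - 1)) k"

text \<open>A greedy policy: at every state, the sampling set consists of S indices with the largest
relay AoI (maximizes the sum of g over all S-subsets of {1..K}), and the update set of U indices
with the largest gaps h - g (ties broken arbitrarily).\<close>
definition greedy_policy :: "nat \<Rightarrow> nat \<Rightarrow> nat \<Rightarrow> policy \<Rightarrow> bool" where
  "greedy_policy K S U G \<longleftrightarrow> valid_policy K S U G \<and>
     (\<forall>st. (\<forall>A. A \<subseteq> {1..K} \<and> card A = S \<longrightarrow>
               (\<Sum>k\<in>A. real (fst st k)) \<le> (\<Sum>k\<in>fst (G st). real (fst st k))) \<and>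
           (\<forall>A. A \<subseteq> {1..K} \<and> card A = U \<longrightarrow>
               (\<Sum>k\<in>A. real (snd st k) - real (fst st k))
                 \<le> (\<Sum>k\<in>snd (G st). real (snd st k) - real (fst st k))))"

end

theory Submission
  imports Defs
begin

text \<open>With S = U the processes with a positive gap h - g are exactly those sampled in the
previous slot, so the greedy update set covers them and under G every destination age is the
previous relay age plus one, a lower bound valid for every policy. It remains to see that G
minimizes the relay age sum in every slot. That sum is the sum over thresholds c of the number
of processes with relay age at least c, and G minimizes each of these counts because a set of
maximal relay age sum is nested with every superlevel set of the relay ages.\<close>

lemma max_sum_subset_exchange:
  fixes f :: "'a \<Rightarrow> 'b::ordered_ab_group_add"
  assumes max: "\<And>B. B \<subseteq> I \<Longrightarrow> card B = card A \<Longrightarrow> sum f B \<le> sum f A"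
    and A: "finite A" "A \<subseteq> I" and a: "a \<in> A" and k: "k \<in> I - A"
  shows "f k \<le> f a"
proof -
  let ?B = "insert k (A - {a})"
  have "?B \<subseteq> I"
    using A k by auto
  moreover have "card ?B = Suc (card (A - {a}))"
    using A k by (intro card_insert_disjoint) auto
  then have "card ?B = card A"
    using card_Suc_Diff1[OF A(1) a] by simp
  ultimately have "sum f ?B \<le> sum f A"
    by (rule max)
  moreover have "sum f ?B = f k + sum f (A - {a})"
    using A k by simp
  moreover have "sum f A = f a + sum f (A - {a})"
    using A a by (simp add: sum.remove)
  ultimately show ?thesis
    by simp
qed

definition superlevel :: "'a set \<Rightarrow> ('a \<Rightarrow> 'b::ord) \<Rightarrow> 'b \<Rightarrow> 'a set" where
  "superlevel I f c = {k \<in> I. c \<le> f k}"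

lemma max_sum_subset_nested_superlevel:
  fixes f :: "'a \<Rightarrow> 'b::ordered_ab_group_add"
  assumes max: "\<And>B. B \<subseteq> I \<Longrightarrow> card B = card A \<Longrightarrow> sum f B \<le> sum f A"
    and A: "finite A" "A \<subseteq> I"
  shows "A \<subseteq> superlevel I f c \<or> superlevel I f c \<subseteq> A"
proof (rule disjCI)
  assume "\<not> superlevel I f c \<subseteq> A"
  then obtain k where k: "k \<in> I - A" "c \<le> f k"
    unfolding superlevel_def by auto
  have "c \<le> f a" if "a \<in> A" for a
    using k max_sum_subset_exchange[OF max A that k(1)] by (blast intro: order_trans)
  then show "A \<subseteq> superlevel I f c"
    using A unfolding superlevel_def by auto
qed

lemma max_sum_subset_covers_positive:
  fixes f :: "'a \<Rightarrow> 'b::ordered_ab_group_add"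
  assumes max: "\<And>B. B \<subseteq> I \<Longrightarrow> card B = card A \<Longrightarrow> sum f B \<le> sum f A"
    and I: "finite I" and A: "A \<subseteq> I" and P: "P \<subseteq> I" "card P = card A"
    and pos: "\<And>k. k \<in> P \<Longrightarrow> 0 < f k" and nonpos: "\<And>k. k \<in> I - P \<Longrightarrow> f k \<le> 0"
  shows "P \<subseteq> A"
proof
  fix j assume j: "j \<in> P"
  show "j \<in> A"
  proof (rule ccontr)
    assume "j \<notin> A"
    have "finite P"
      using I P(1) by (rule finite_subset[rotated])
    then have "\<not> A \<subseteq> P"
      using card_subset_eq[of P A] P(2) j \<open>j \<notin> A\<close> by auto
    then obtain a where a: "a \<in> A" "a \<notin> P"
      by blast
    have "f j \<le> f a"
      using max_sum_subset_exchange[OF max finite_subset[OF A I] A a(1)] j P(1) \<open>j \<notin> A\<close> by blast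
    moreover have "0 < f j" "f a \<le> 0"
      using pos[OF j] nonpos a A by auto
    ultimately show False
      by simp
  qed
qed

lemma card_Diff_le_card_Diff_if_nested:
  assumes "finite A" "finite B" "card X \<le> card Y" "card B \<le> card A" "A \<subseteq> X \<or> X \<subseteq> A"
  shows "card (X - A) \<le> card (Y - B)"
  using assms(5)
proof
  assume "A \<subseteq> X"
  then have "card (X - A) = card X - card A"
    using assms(1) by (rule card_Diff_subset[rotated])
  also have "\<dots> \<le> card Y - card B"
    using assms(3,4) by linarith
  also have "\<dots> \<le> card (Y - B)"
    using assms(2) by (rule diff_card_le_card_Diff)
  finally show ?thesis .
next
  assume "X \<subseteq> A"
  then show ?thesis
    by (metis Diff_eq_empty_iff card.empty zero_le)
qed

lemma sum_eq_sum_card_superlevel: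
  fixes x :: "'a \<Rightarrow> nat"
  assumes "finite I" and "\<And>k. k \<in> I \<Longrightarrow> x k \<le> M"
  shows "(\<Sum>k\<in>I. x k) = (\<Sum>c=1..M. card (superlevel I x c))"
proof -
  have "x k = (\<Sum>c=1..M. if c \<le> x k then 1 else 0)" if "k \<in> I" for k
  proof -
    have "{c \<in> {1..M}. c \<le> x k} = {1..x k}"
      using assms(2)[OF that] by auto
    then show ?thesis
      by (simp add: sum.If_cases Int_def conj_commute)
  qed
  then have "(\<Sum>k\<in>I. x k) = (\<Sum>k\<in>I. \<Sum>c=1..M. if c \<le> x k then 1 else 0)"
    by (rule sum.cong[OF refl])
  also have "\<dots> = (\<Sum>c=1..M. \<Sum>k\<in>I. if c \<le> x k then 1 else 0)"
    by (rule sum.swap)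
  also have "\<dots> = (\<Sum>c=1..M. card (superlevel I x c))"
    using assms(1) by (simp add: superlevel_def sum.If_cases Int_def conj_commute)
  finally show ?thesis .
qed

lemma fst_traj_Suc:
  "fst (traj \<pi> (Suc n)) k = (if k \<in> fst (\<pi> (traj \<pi> n)) then 1 else fst (traj \<pi> n) k + 1)"
  by (simp add: step_def)

lemma snd_traj_Suc:
  "snd (traj \<pi> (Suc n)) k =
     (if k \<in> snd (\<pi> (traj \<pi> n)) then fst (traj \<pi> n) k + 1 else snd (traj \<pi> n) k + 1)"
  by (simp add: step_def)

declare traj.simps(2) [simp del]

lemma fst_traj_ge_1: "1 \<le> fst (traj \<pi> n) k"
  by (cases n) (simp_all add: fst_traj_Suc)

lemma fst_traj_le: "fst (traj \<pi> n) k \<le> Suc n"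
  by (induction n) (simp_all add: fst_traj_Suc)

lemma fst_traj_le_snd_traj: "fst (traj \<pi> n) k \<le> snd (traj \<pi> n) k"
  by (induction n) (simp_all add: fst_traj_Suc snd_traj_Suc)

lemma snd_traj_Suc_ge: "fst (traj \<pi> n) k + 1 \<le> snd (traj \<pi> (Suc n)) k"
  using fst_traj_le_snd_traj[of \<pi> n k] by (simp add: snd_traj_Suc)

lemma valid_policyD:
  assumes "valid_policy K S U \<pi>"
  shows "fst (\<pi> st) \<subseteq> {1..K}" "card (fst (\<pi> st)) = S"
    and "snd (\<pi> st) \<subseteq> {1..K}" "card (snd (\<pi> st)) = U"
  using assms unfolding valid_policy_def by blast+

lemma greedy_policyD:
  assumes "greedy_policy K S U G"
  shows "valid_policy K S U G"
    and "A \<subseteq> {1..K} \<Longrightarrow> card A = S \<Longrightarrow>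
      (\<Sum>k\<in>A. real (fst st k)) \<le> (\<Sum>k\<in>fst (G st). real (fst st k))"
    and "A \<subseteq> {1..K} \<Longrightarrow> card A = U \<Longrightarrow>
      (\<Sum>k\<in>A. real (snd st k) - real (fst st k))
        \<le> (\<Sum>k\<in>snd (G st). real (snd st k) - real (fst st k))"
  using assms unfolding greedy_policy_def by blast+

lemma greedy_snd_traj_Suc:
  assumes G: "greedy_policy K S U G" and SU: "S = U"
  shows "snd (traj G (Suc n)) k = fst (traj G n) k + 1"
proof (induction n arbitrary: k)
  case 0
  show ?case
    by (simp add: snd_traj_Suc)
next
  case (Suc n)
  define st where "st = traj G (Suc n)"
  define P where "P = fst (G (traj G n))"
  define Q where "Q = snd (G st)"
  define gap where "gap k = real (snd st k) - real (fst st k)" for k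
  note valid = valid_policyD[OF greedy_policyD(1)[OF G]]
  have "P \<subseteq> Q"
  proof (rule max_sum_subset_covers_positive)
    show "B \<subseteq> {1..K} \<Longrightarrow> card B = card Q \<Longrightarrow> sum gap B \<le> sum gap Q" for B
      using greedy_policyD(3)[OF G] valid(4) unfolding gap_def Q_def by simp
    show "P \<subseteq> {1..K}" "card P = card Q"
      using valid SU by (simp_all add: P_def Q_def)
    show "0 < gap k" if "k \<in> P" for k
      using that Suc.IH[of k] fst_traj_ge_1[of G n k] by (simp add: gap_def st_def P_def fst_traj_Suc)
    show "gap k \<le> 0" if "k \<in> {1..K} - P" for k
      using that Suc.IH[of k] by (simp add: gap_def st_def P_def fst_traj_Suc)
  qed (use valid in \<open>simp_all add: Q_def\<close>)
  then show ?case
    using Suc.IH[of k] by (auto simp: st_def P_def Q_def fst_traj_Suc snd_traj_Suc)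
qed

lemma superlevel_fst_traj_le_1:
  "c \<le> 1 \<Longrightarrow> superlevel I (fst (traj \<pi> n)) c = I"
  using fst_traj_ge_1[of \<pi> n] by (auto simp: superlevel_def intro: order_trans)

lemma superlevel_fst_traj_Suc:
  "1 \<le> c \<Longrightarrow> superlevel I (fst (traj \<pi> (Suc n))) (Suc c)
     = superlevel I (fst (traj \<pi> n)) c - fst (\<pi> (traj \<pi> n))"
  by (auto simp: superlevel_def fst_traj_Suc)

lemma greedy_card_superlevel_le:
  assumes G: "greedy_policy K S U G" and \<pi>: "valid_policy K S U \<pi>"
  shows "card (superlevel {1..K} (fst (traj G n)) c) \<le> card (superlevel {1..K} (fst (traj \<pi> n)) c)"
proof (induction n arbitrary: c)
  case 0
  show ?case
    by simp
next
  case (Suc n)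
  show ?case
  proof (cases "c \<le> 1")
    case True
    then show ?thesis
      by (simp add: superlevel_fst_traj_le_1)
  next
    case False
    then obtain d where c: "c = Suc d" "1 \<le> d"
      by (cases c) auto
    let ?A = "fst (G (traj G n))" and ?B = "fst (\<pi> (traj \<pi> n))"
    let ?X = "superlevel {1..K} (fst (traj G n)) d" and ?Y = "superlevel {1..K} (fst (traj \<pi> n)) d"
    note valid_G = valid_policyD[OF greedy_policyD(1)[OF G]] and valid_\<pi> = valid_policyD[OF \<pi>]
    have "?A \<subseteq> superlevel {1..K} (\<lambda>k. real (fst (traj G n) k)) (real d) \<or>
        superlevel {1..K} (\<lambda>k. real (fst (traj G n) k)) (real d) \<subseteq> ?A"
      using greedy_policyD(2)[OF G] valid_G finite_subset[OF valid_G(1)]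
      by (intro max_sum_subset_nested_superlevel) auto
    then have "?A \<subseteq> ?X \<or> ?X \<subseteq> ?A"
      by (simp add: superlevel_def)
    then have "card (?X - ?A) \<le> card (?Y - ?B)"
      using Suc.IH[of d] valid_G(2) valid_\<pi>(2)
        finite_subset[OF valid_G(1)] finite_subset[OF valid_\<pi>(1)]
      by (intro card_Diff_le_card_Diff_if_nested) auto
    then show ?thesis
      using c by (simp add: superlevel_fst_traj_Suc)
  qed
qed

lemma greedy_fst_traj_sum_le:
  assumes "greedy_policy K S U G" and "valid_policy K S U \<pi>"
  shows "(\<Sum>k=1..K. fst (traj G n) k) \<le> (\<Sum>k=1..K. fst (traj \<pi> n) k)"
proof -
  have "(\<Sum>k=1..K. fst (traj G n) k) = (\<Sum>c=1..Suc n. card (superlevel {1..K} (fst (traj G n)) c))"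
    by (rule sum_eq_sum_card_superlevel) (simp_all add: fst_traj_le)
  also have "\<dots> \<le> (\<Sum>c=1..Suc n. card (superlevel {1..K} (fst (traj \<pi> n)) c))"
    using greedy_card_superlevel_le[OF assms] by (rule sum_mono)
  also have "\<dots> = (\<Sum>k=1..K. fst (traj \<pi> n) k)"
    by (rule sum_eq_sum_card_superlevel[symmetric]) (simp_all add: fst_traj_le)
  finally show ?thesis .
qed

lemma greedy_snd_traj_sum_le:
  assumes "greedy_policy K S U G" and "valid_policy K S U \<pi>" and "S = U"
  shows "(\<Sum>k=1..K. snd (traj G n) k) \<le> (\<Sum>k=1..K. snd (traj \<pi> n) k)"
proof (cases n)
  case 0
  then show ?thesis
    by simp
next
  case (Suc m)
  have "(\<Sum>k=1..K. snd (traj G n) k) = (\<Sum>k=1..K. fst (traj G m) k + 1)"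
    using Suc greedy_snd_traj_Suc[OF assms(1,3)] by simp
  also have "\<dots> = (\<Sum>k=1..K. fst (traj G m) k) + K"
    by (subst sum.distrib) simp
  also have "\<dots> \<le> (\<Sum>k=1..K. fst (traj \<pi> m) k) + K"
    using greedy_fst_traj_sum_le[OF assms(1,2)] by simp
  also have "\<dots> = (\<Sum>k=1..K. fst (traj \<pi> m) k + 1)"
    by (subst sum.distrib) simp
  also have "\<dots> \<le> (\<Sum>k=1..K. snd (traj \<pi> n) k)"
    using Suc snd_traj_Suc_ge by (simp add: sum_mono)
  finally show ?thesis .
qed

lemma greedy_gAoI_sum_le:
  assumes "greedy_policy K S U G" and "valid_policy K S U \<pi>"
  shows "(\<Sum>k=1..K. real (gAoI G k t)) \<le> (\<Sum>k=1..K. real (gAoI \<pi> k t))"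
  unfolding gAoI_def of_nat_sum[symmetric] of_nat_le_iff
  using assms by (rule greedy_fst_traj_sum_le)

lemma greedy_hAoI_sum_le:
  assumes "greedy_policy K S U G" and "valid_policy K S U \<pi>" and "S = U"
  shows "(\<Sum>k=1..K. real (hAoI G k t)) \<le> (\<Sum>k=1..K. real (hAoI \<pi> k t))"
  unfolding hAoI_def of_nat_sum[symmetric] of_nat_le_iff
  using assms by (rule greedy_snd_traj_sum_le)

theorem theorem2:
  fixes K S U :: nat and G :: policy
  assumes "K \<ge> 2" and "1 \<le> S" and "S < K" and "1 \<le> U" and "U < K" and "S = U"
    and "greedy_policy K S U G"
  shows "\<forall>\<pi>. valid_policy K S U \<pi> \<longrightarrow>
           (\<forall>T\<ge>1. (\<Sum>t=1..T. \<Sum>k=1..K. real (hAoI G k t)) / (real T * real K)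
                  \<le> (\<Sum>t=1..T. \<Sum>k=1..K. real (hAoI \<pi> k t)) / (real T * real K)) \<and>
           (\<forall>t\<ge>1. (\<Sum>k=1..K. real (hAoI G k t)) / real K
                  \<le> (\<Sum>k=1..K. real (hAoI \<pi> k t)) / real K) \<and>
           (\<forall>t\<ge>1. (\<Sum>k=1..K. real (gAoI G k t)) / real K
                  \<le> (\<Sum>k=1..K. real (gAoI \<pi> k t)) / real K)"
proof -
  have "(\<Sum>t=1..T. \<Sum>k=1..K. real (hAoI G k t)) \<le> (\<Sum>t=1..T. \<Sum>k=1..K. real (hAoI \<pi> k t))"
    if "valid_policy K S U \<pi>" for \<pi> T
    using greedy_hAoI_sum_le[OF assms(7) that assms(6)] by (rule sum_mono)
  then show ?thesis
    using greedy_hAoI_sum_le[OF assms(7) _ assms(6)] greedy_gAoI_sum_le[OF assms(7)]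
    by (auto intro!: divide_right_mono)
qed

end
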